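(* For a $K$-armed bandit with rewards $r\in\mathbb{R}^K$, a full-support policy $\pi$, and step size $\eta>0$, let $\pi'(i)=\pi(i)e^{\eta f_i}/Z$ with $Z=\mathbb{E}_\pi[e^{\eta f}]=\sum_{i}\pi(i)e^{\eta f_i}$. Then, with $V=\pi^\top r$ and $V'=\pi'^\top r$, \[ V'-V=\frac{\mathrm{Cov}_\pi(e^{\eta f},U)}{\mathbb{E}_\pi[e^{\eta f}]}=\frac1Z\sum_{i:\,U_i>0}\pi_iU_i\big(e^{\eta U_i}-1\big)\;\ge\;0. \]
   Context: $U_i:=r(i)-\pi^\top r$ is the advantage of arm $i$, $f_i:=U_i\mathbf{1}\{U_i>0\}$ is the gated advantage, $\pi_i:=\pi(i)$, and $\mathrm{Cov}_\pi$ denotes covariance under $i\sim\pi$. This is the discrete EG update. *)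

theory Defs
  imports "HOL-Analysis.Analysis"
begin

definition expect :: "nat \<Rightarrow> (nat \<Rightarrow> real) \<Rightarrow> (nat \<Rightarrow> real) \<Rightarrow> real" where
  "expect K \<pi> X = (\<Sum>i<K. \<pi> i * X i)"

definition cov :: "nat \<Rightarrow> (nat \<Rightarrow> real) \<Rightarrow> (nat \<Rightarrow> real) \<Rightarrow> (nat \<Rightarrow> real) \<Rightarrow> real" where
  "cov K \<pi> X Y = expect K \<pi> (\<lambda>i. X i * Y i) - expect K \<pi> X * expect K \<pi> Y"

definition policy_value :: "nat \<Rightarrow> (nat \<Rightarrow> real) \<Rightarrow> (nat \<Rightarrow> real) \<Rightarrow> real" where
  "policy_value K \<pi> r = (\<Sum>i<K. \<pi> i * r i)"

definition adv :: "nat \<Rightarrow> (nat \<Rightarrow> real) \<Rightarrow> (nat \<Rightarrow> real) \<Rightarrow> nat \<Rightarrow> real" where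
  "adv K \<pi> r i = r i - policy_value K \<pi> r"

definition gated_adv :: "nat \<Rightarrow> (nat \<Rightarrow> real) \<Rightarrow> (nat \<Rightarrow> real) \<Rightarrow> nat \<Rightarrow> real" where
  "gated_adv K \<pi> r i = (if adv K \<pi> r i > 0 then adv K \<pi> r i else 0)"

definition partition_Z :: "nat \<Rightarrow> real \<Rightarrow> (nat \<Rightarrow> real) \<Rightarrow> (nat \<Rightarrow> real) \<Rightarrow> real" where
  "partition_Z K \<eta> \<pi> r = (\<Sum>i<K. \<pi> i * exp (\<eta> * gated_adv K \<pi> r i))"

definition eg_update :: "nat \<Rightarrow> real \<Rightarrow> (nat \<Rightarrow> real) \<Rightarrow> (nat \<Rightarrow> real) \<Rightarrow> nat \<Rightarrow> real" where
  "eg_update K \<eta> \<pi> r i = \<pi> i * exp (\<eta> * gated_adv K \<pi> r i) / partition_Z K \<eta> \<pi> r"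

end

theory Submission
  imports Defs
begin

text \<open>The update tilts \<open>\<pi>\<close> by the weights \<open>w = exp (\<eta> f)\<close>, and for any tilt the value gain is
  \<open>E[w r]/E[w] - E[r] = Cov(w, U)/E[w]\<close>. Since \<open>U\<close> is centred, \<open>Cov(w, U) = E[(w - 1) U]\<close>, and
  \<open>w - 1\<close> vanishes exactly where \<open>U \<le> 0\<close>, leaving the nonnegative terms
  \<open>\<pi>\<^sub>i U\<^sub>i (exp (\<eta> U\<^sub>i) - 1)\<close> with \<open>U\<^sub>i > 0\<close>.\<close>

lemma policy_value_eq_expect: "policy_value K \<pi> r = expect K \<pi> r"
  by (simp add: policy_value_def expect_def)

lemma expect_diff_const:
  assumes "(\<Sum>i<K. \<pi> i) = 1"
  shows "expect K \<pi> (\<lambda>i. X i - c) = expect K \<pi> X - c"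
  using assms by (simp add: expect_def right_diff_distrib sum_subtractf sum_distrib_right[symmetric])

lemma cov_diff_const:
  assumes "(\<Sum>i<K. \<pi> i) = 1"
  shows "cov K \<pi> X (\<lambda>i. Y i - c) = cov K \<pi> X Y"
proof -
  have "expect K \<pi> (\<lambda>i. X i * (Y i - c)) = expect K \<pi> (\<lambda>i. X i * Y i) - c * expect K \<pi> X"
    by (simp add: expect_def algebra_simps sum_subtractf sum_distrib_left)
  then show ?thesis
    by (simp add: cov_def expect_diff_const[OF assms] algebra_simps)
qed

lemma adv_eq: "adv K \<pi> r = (\<lambda>i. r i - expect K \<pi> r)"
  by (rule ext) (simp add: adv_def policy_value_eq_expect)

lemma expect_adv_eq_0:
  assumes "(\<Sum>i<K. \<pi> i) = 1"
  shows "expect K \<pi> (adv K \<pi> r) = 0"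
  by (simp add: adv_eq expect_diff_const[OF assms])

lemma policy_value_tilt_diff:
  assumes "(\<Sum>i<K. \<pi> i) = 1" and "expect K \<pi> w \<noteq> 0"
  shows "policy_value K (\<lambda>i. \<pi> i * w i / expect K \<pi> w) r - policy_value K \<pi> r
           = cov K \<pi> w (adv K \<pi> r) / expect K \<pi> w"
proof -
  have "policy_value K (\<lambda>i. \<pi> i * w i / expect K \<pi> w) r
          = expect K \<pi> (\<lambda>i. w i * r i) / expect K \<pi> w"
    by (simp add: policy_value_def expect_def sum_divide_distrib algebra_simps)
  moreover have "cov K \<pi> w (adv K \<pi> r) = cov K \<pi> w r"
    by (simp add: adv_eq cov_diff_const[OF assms(1)])
  ultimately show ?thesis
    using assms(2) by (simp add: cov_def policy_value_eq_expect field_simps)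
qed

lemma expect_exp_gated_adv:
  "expect K \<pi> (\<lambda>i. exp (\<eta> * gated_adv K \<pi> r i)) = partition_Z K \<eta> \<pi> r"
  by (simp add: expect_def partition_Z_def)

lemma eg_update_eq_tilt:
  "eg_update K \<eta> \<pi> r
     = (\<lambda>i. \<pi> i * exp (\<eta> * gated_adv K \<pi> r i) / expect K \<pi> (\<lambda>i. exp (\<eta> * gated_adv K \<pi> r i)))"
  by (rule ext) (simp add: eg_update_def expect_exp_gated_adv)

lemma partition_Z_ge_1:
  assumes "\<eta> \<ge> 0" and "\<And>i. i < K \<Longrightarrow> \<pi> i \<ge> 0" and "(\<Sum>i<K. \<pi> i) = 1"
  shows "partition_Z K \<eta> \<pi> r \<ge> 1"
proof -
  have "\<pi> i \<le> \<pi> i * exp (\<eta> * gated_adv K \<pi> r i)" if "i < K" for i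
    using assms(1) assms(2)[OF that] by (simp add: gated_adv_def mult_le_cancel_left1)
  then have "(\<Sum>i<K. \<pi> i) \<le> partition_Z K \<eta> \<pi> r"
    unfolding partition_Z_def by (rule sum_mono) simp
  with assms(3) show ?thesis by simp
qed

lemma cov_exp_gated_adv:
  assumes "(\<Sum>i<K. \<pi> i) = 1"
  shows "cov K \<pi> (\<lambda>i. exp (\<eta> * gated_adv K \<pi> r i)) (adv K \<pi> r)
           = (\<Sum>i\<in>{i. i < K \<and> adv K \<pi> r i > 0}. \<pi> i * adv K \<pi> r i * (exp (\<eta> * adv K \<pi> r i) - 1))"
    (is "_ = ?S")
proof -
  let ?U = "adv K \<pi> r"
  have "cov K \<pi> (\<lambda>i. exp (\<eta> * gated_adv K \<pi> r i)) ?U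
          = (\<Sum>i<K. \<pi> i * exp (\<eta> * gated_adv K \<pi> r i) * ?U i)"
    using expect_adv_eq_0[OF assms] by (simp add: cov_def expect_def algebra_simps)
  also have "\<dots> = (\<Sum>i<K. \<pi> i * ?U i)
                  + (\<Sum>i<K. if ?U i > 0 then \<pi> i * ?U i * (exp (\<eta> * ?U i) - 1) else 0)"
    unfolding sum.distrib[symmetric] by (rule sum.cong) (auto simp: gated_adv_def algebra_simps)
  also have "(\<Sum>i<K. \<pi> i * ?U i) = 0"
    using expect_adv_eq_0[OF assms] by (simp add: expect_def)
  also have "(\<Sum>i<K. if ?U i > 0 then \<pi> i * ?U i * (exp (\<eta> * ?U i) - 1) else 0) = ?S"
    by (simp add: sum.inter_filter[symmetric] conj_commute)
  finally show ?thesis by simp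
qed

lemma gain_terms_nonneg:
  assumes "\<eta> \<ge> 0" and "\<And>i. i < K \<Longrightarrow> \<pi> i \<ge> 0"
  shows "(\<Sum>i\<in>{i. i < K \<and> adv K \<pi> r i > 0}. \<pi> i * adv K \<pi> r i * (exp (\<eta> * adv K \<pi> r i) - 1)) \<ge> 0"
proof (rule sum_nonneg)
  fix i assume i: "i \<in> {i. i < K \<and> adv K \<pi> r i > 0}"
  then have "exp (\<eta> * adv K \<pi> r i) \<ge> 1" using assms(1) by simp
  with i assms(2) show "\<pi> i * adv K \<pi> r i * (exp (\<eta> * adv K \<pi> r i) - 1) \<ge> 0" by simp
qed

theorem lemma5:
  fixes K :: nat and \<pi> r :: "nat \<Rightarrow> real" and \<eta> :: real
  assumes "K \<ge> 1"
    and "\<And>i. i < K \<Longrightarrow> \<pi> i > 0"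
    and "(\<Sum>i<K. \<pi> i) = 1"
    and "\<eta> > 0"
  shows "policy_value K (eg_update K \<eta> \<pi> r) r - policy_value K \<pi> r
           = cov K \<pi> (\<lambda>i. exp (\<eta> * gated_adv K \<pi> r i)) (adv K \<pi> r)
             / expect K \<pi> (\<lambda>i. exp (\<eta> * gated_adv K \<pi> r i)) \<and>
         cov K \<pi> (\<lambda>i. exp (\<eta> * gated_adv K \<pi> r i)) (adv K \<pi> r)
             / expect K \<pi> (\<lambda>i. exp (\<eta> * gated_adv K \<pi> r i))
           = (1 / partition_Z K \<eta> \<pi> r) *
             (\<Sum>i\<in>{i. i < K \<and> adv K \<pi> r i > 0}.
                 \<pi> i * adv K \<pi> r i * (exp (\<eta> * adv K \<pi> r i) - 1)) \<and>
         (1 / partition_Z K \<eta> \<pi> r) *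
             (\<Sum>i\<in>{i. i < K \<and> adv K \<pi> r i > 0}.
                 \<pi> i * adv K \<pi> r i * (exp (\<eta> * adv K \<pi> r i) - 1)) \<ge> 0"
proof -
  \<comment> \<open>\<open>K \<ge> 1\<close> is implied by \<open>\<Sum>\<pi> = 1\<close>, and full support is only needed as \<open>\<pi> \<ge> 0\<close>.\<close>
  have \<pi>_nonneg: "\<And>i. i < K \<Longrightarrow> \<pi> i \<ge> 0" using assms(2) by (simp add: less_imp_le)
  have Z_pos: "partition_Z K \<eta> \<pi> r > 0"
    using partition_Z_ge_1[of \<eta> K \<pi> r] assms(3,4) \<pi>_nonneg by simp
  have value_gain: "policy_value K (eg_update K \<eta> \<pi> r) r - policy_value K \<pi> r
      = cov K \<pi> (\<lambda>i. exp (\<eta> * gated_adv K \<pi> r i)) (adv K \<pi> r)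
        / expect K \<pi> (\<lambda>i. exp (\<eta> * gated_adv K \<pi> r i))"
    unfolding eg_update_eq_tilt
    using Z_pos by (intro policy_value_tilt_diff assms(3)) (simp add: expect_exp_gated_adv)
  show ?thesis
    using value_gain cov_exp_gated_adv[OF assms(3)] gain_terms_nonneg[of \<eta> K \<pi> r]
      assms(4) \<pi>_nonneg Z_pos
    by (simp add: expect_exp_gated_adv)
qed

end
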